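(* Let $G=(V,E)$ be a finite, connected, simple, undirected graph with no isolated vertices, let $\alpha\in(0,1)$, and let $S\subset V$ be nonempty with $\mathrm{vol}(S)\le\mathrm{vol}(V)/2$. Then $$h_{S,\alpha}\ \le\ \frac{1-\alpha}{\alpha}\,\frac{d_{\mathrm{avg}}(S)}{d_{\min}(S)}\,h_S.$$
   Context: $A$ is the adjacency matrix and $D$ the diagonal degree matrix. The personalized PageRank diffusion matrix is $R_\alpha=\sum_{k=0}^\infty\alpha(1-\alpha)^k(D^{-1}A)^k$. $\mathrm{vol}(S)=\sum_{v\in S}d_v$; $\partial S$ is the set of edges with exactly one endpoint in $S$; $h_S=|\partial S|/\mathrm{vol}(S)$; $h_{S,\alpha}=\frac{1}{|S|}\sum_{i\in S,\ j\in V\setminus S}(R_\alpha)_{ij}$; $d_{\mathrm{avg}}(S)=\mathrm{vol}(S)/|S|$ and $d_{\min}(S)=\min_{v\in S}d_v$. *)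

theory Defs
  imports "HOL-Analysis.Analysis"
begin

definition simple_graph :: "'a set \<Rightarrow> ('a \<Rightarrow> 'a \<Rightarrow> bool) \<Rightarrow> bool" where
  "simple_graph V E \<longleftrightarrow> finite V \<and> (\<forall>u v. E u v \<longrightarrow> u \<in> V \<and> v \<in> V)
     \<and> (\<forall>u v. E u v \<longrightarrow> E v u) \<and> (\<forall>v. \<not> E v v)"

definition connected_graph :: "'a set \<Rightarrow> ('a \<Rightarrow> 'a \<Rightarrow> bool) \<Rightarrow> bool" where
  "connected_graph V E \<longleftrightarrow> (\<forall>u\<in>V. \<forall>v\<in>V. E\<^sup>*\<^sup>* u v)"

definition degree :: "'a set \<Rightarrow> ('a \<Rightarrow> 'a \<Rightarrow> bool) \<Rightarrow> 'a \<Rightarrow> nat" where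
  "degree V E v = card {u\<in>V. E v u}"

definition vol :: "'a set \<Rightarrow> ('a \<Rightarrow> 'a \<Rightarrow> bool) \<Rightarrow> 'a set \<Rightarrow> real" where
  "vol V E S = (\<Sum>v\<in>S. real (degree V E v))"

definition boundary :: "'a set \<Rightarrow> ('a \<Rightarrow> 'a \<Rightarrow> bool) \<Rightarrow> 'a set \<Rightarrow> 'a set set" where
  "boundary V E S = {{u, v} | u v. E u v \<and> u \<in> S \<and> v \<in> V - S}"

definition conductance :: "'a set \<Rightarrow> ('a \<Rightarrow> 'a \<Rightarrow> bool) \<Rightarrow> 'a set \<Rightarrow> real" where
  "conductance V E S = real (card (boundary V E S)) / vol V E S"

definition walk_matrix :: "'a set \<Rightarrow> ('a \<Rightarrow> 'a \<Rightarrow> bool) \<Rightarrow> 'a \<Rightarrow> 'a \<Rightarrow> real" where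
  "walk_matrix V E i j = (if E i j then 1 / real (degree V E i) else 0)"

fun walk_power :: "'a set \<Rightarrow> ('a \<Rightarrow> 'a \<Rightarrow> bool) \<Rightarrow> nat \<Rightarrow> 'a \<Rightarrow> 'a \<Rightarrow> real" where
  "walk_power V E 0 i j = (if i = j then 1 else 0)"
| "walk_power V E (Suc k) i j = (\<Sum>l\<in>V. walk_power V E k i l * walk_matrix V E l j)"

definition ppr_matrix :: "'a set \<Rightarrow> ('a \<Rightarrow> 'a \<Rightarrow> bool) \<Rightarrow> real \<Rightarrow> 'a \<Rightarrow> 'a \<Rightarrow> real" where
  "ppr_matrix V E \<alpha> i j = (\<Sum>k. \<alpha> * (1 - \<alpha>) ^ k * walk_power V E k i j)"

definition ppr_conductance :: "'a set \<Rightarrow> ('a \<Rightarrow> 'a \<Rightarrow> bool) \<Rightarrow> real \<Rightarrow> 'a set \<Rightarrow> real" where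
  "ppr_conductance V E \<alpha> S =
     (1 / real (card S)) * (\<Sum>i\<in>S. \<Sum>j\<in>V - S. ppr_matrix V E \<alpha> i j)"

definition avg_degree :: "'a set \<Rightarrow> ('a \<Rightarrow> 'a \<Rightarrow> bool) \<Rightarrow> 'a set \<Rightarrow> real" where
  "avg_degree V E S = vol V E S / real (card S)"

definition min_degree :: "'a set \<Rightarrow> ('a \<Rightarrow> 'a \<Rightarrow> bool) \<Rightarrow> 'a set \<Rightarrow> real" where
  "min_degree V E S = real (Min (degree V E ` S))"

end

theory Submission
  imports Defs
begin

text \<open>Let \<open>g k = \<Sum>i\<in>S. \<Sum>j\<in>V-S. (D\<^sup>-\<^sup>1A)\<^sup>k i j\<close> be the mass that has left S after k steps of
  the random walk started from every vertex of S. The degree vector is a left eigenvector of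
  the walk matrix, so the walk started from S puts mass at most \<open>d\<^sub>l / d\<^sub>m\<^sub>i\<^sub>n(S)\<close> on a vertex l;
  from l a fraction \<open>|\<partial>{l} \<inter> \<partial>S| / d\<^sub>l\<close> leaves S. Hence each step adds at most
  \<open>|\<partial>S| / d\<^sub>m\<^sub>i\<^sub>n(S)\<close> to the escaped mass, \<open>g k \<le> k |\<partial>S| / d\<^sub>m\<^sub>i\<^sub>n(S)\<close>, and summing against the
  PageRank weights gives \<open>\<Sum>\<^sub>k \<alpha>(1-\<alpha>)\<^sup>k k = (1-\<alpha>)/\<alpha>\<close>.\<close>

lemma weighted_linear_series:
  fixes f :: "nat \<Rightarrow> real" and x c :: real
  assumes "0 \<le> x" "x < 1" "\<And>k. 0 \<le> f k" "\<And>k. f k \<le> real k * c"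
  shows "summable (\<lambda>k. x ^ k * f k)" and "(\<Sum>k. x ^ k * f k) \<le> c * x / (1 - x)\<^sup>2"
proof -
  have "(\<lambda>n. x * (real (Suc n) * x ^ n)) sums (x * (1 / (1 - x)\<^sup>2))"
    using geometric_deriv_sums[of x] assms(1,2) by (intro sums_mult) auto
  then have "(\<lambda>n. real (Suc n) * x ^ Suc n) sums (x / (1 - x)\<^sup>2)"
    by (simp add: algebra_simps)
  then have "(\<lambda>k. real k * x ^ k) sums (x / (1 - x)\<^sup>2)"
    using sums_Suc_iff[of "\<lambda>k. real k * x ^ k"] by simp
  then have majorant: "(\<lambda>k. c * (real k * x ^ k)) sums (c * x / (1 - x)\<^sup>2)"
    using sums_mult by fastforce
  have term_le: "x ^ k * f k \<le> c * (real k * x ^ k)" for k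
    using mult_left_mono[OF assms(4)[of k], of "x ^ k"] assms(1) by (simp add: algebra_simps)
  show summable: "summable (\<lambda>k. x ^ k * f k)"
    using assms(1,3) term_le
    by (intro summable_comparison_test[OF _ sums_summable[OF majorant]]) auto
  show "(\<Sum>k. x ^ k * f k) \<le> c * x / (1 - x)\<^sup>2"
    using suminf_le[OF term_le summable sums_summable[OF majorant]] sums_unique[OF majorant]
    by simp
qed

locale degree_positive_graph =
  fixes V :: "'a set" and E :: "'a \<Rightarrow> 'a \<Rightarrow> bool"
  assumes simple: "simple_graph V E" and degree_pos: "\<forall>v\<in>V. degree V E v > 0"
begin

lemma finite_vertices: "finite V"
  using simple by (simp add: simple_graph_def)

lemma edge_sym: "E u v \<Longrightarrow> E v u"
  using simple by (simp add: simple_graph_def)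

lemma min_degree_pos:
  assumes "S \<subseteq> V" "S \<noteq> {}"
  shows "0 < min_degree V E S"
proof -
  have "finite S"
    using assms(1) finite_vertices finite_subset by blast
  then have "Min (degree V E ` S) \<in> degree V E ` S"
    using assms(2) by (intro Min_in) auto
  then show ?thesis
    using assms(1) degree_pos unfolding min_degree_def by auto
qed

lemma min_degree_le_degree: "S \<subseteq> V \<Longrightarrow> \<forall>i\<in>S. min_degree V E S \<le> real (degree V E i)"
  using finite_vertices finite_subset unfolding min_degree_def by fastforce

lemma vol_pos:
  assumes "S \<subseteq> V" "S \<noteq> {}"
  shows "0 < vol V E S"
  unfolding vol_def using assms degree_pos finite_subset[OF assms(1) finite_vertices]
  by (intro sum_pos) (auto simp: subset_iff)

lemma walk_matrix_nonneg: "0 \<le> walk_matrix V E l j"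
  by (simp add: walk_matrix_def)

lemma walk_power_nonneg: "0 \<le> walk_power V E k i j"
  by (induction k arbitrary: j) (auto intro!: sum_nonneg mult_nonneg_nonneg walk_matrix_nonneg)

lemma sum_walk_matrix:
  assumes "finite A"
  shows "(\<Sum>j\<in>A. walk_matrix V E l j) = real (card {j\<in>A. E l j}) / real (degree V E l)"
  using sum.inter_filter[OF assms, of "\<lambda>_. 1 / real (degree V E l)" "E l"]
  by (simp add: walk_matrix_def)

lemma walk_matrix_row_sum: "l \<in> V \<Longrightarrow> (\<Sum>j\<in>V. walk_matrix V E l j) = 1"
  using sum_walk_matrix[OF finite_vertices, of l] degree_pos by (simp add: degree_def)

lemma degree_left_eigenvector:
  "u \<in> V \<Longrightarrow> (\<Sum>i\<in>V. real (degree V E i) * walk_power V E k i u) = real (degree V E u)"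
proof (induction k arbitrary: u)
  case 0
  then show ?case using finite_vertices by (simp add: if_distrib cong: if_cong)
next
  case (Suc k)
  have "(\<Sum>i\<in>V. real (degree V E i) * walk_power V E (Suc k) i u)
      = (\<Sum>l\<in>V. (\<Sum>i\<in>V. real (degree V E i) * walk_power V E k i l) * walk_matrix V E l u)"
    by (simp add: sum_distrib_left sum_distrib_right mult.assoc) (rule sum.swap)
  also have "\<dots> = (\<Sum>l\<in>V. real (degree V E l) * walk_matrix V E l u)"
    using Suc by simp
  also have "\<dots> = (\<Sum>l\<in>V. if E l u then 1 else 0)"
    using degree_pos by (intro sum.cong) (auto simp: walk_matrix_def)
  also have "\<dots> = real (card {l\<in>V. E l u})"
    using sum.inter_filter[OF finite_vertices, of "\<lambda>_. 1::real" "\<lambda>l. E l u"] by simp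
  also have "{l\<in>V. E l u} = {l\<in>V. E u l}"
    using edge_sym by blast
  finally show ?case by (simp add: degree_def)
qed

lemma walk_power_column_sum_le:
  assumes "u \<in> V" "S \<subseteq> V" "0 < dm" "\<forall>i\<in>S. dm \<le> real (degree V E i)"
  shows "(\<Sum>i\<in>S. walk_power V E k i u) \<le> real (degree V E u) / dm"
proof -
  have "(\<Sum>i\<in>S. walk_power V E k i u) \<le> (\<Sum>i\<in>S. real (degree V E i) * walk_power V E k i u / dm)"
  proof (rule sum_mono)
    fix i assume "i \<in> S"
    then have "dm * walk_power V E k i u \<le> real (degree V E i) * walk_power V E k i u"
      using assms(4) walk_power_nonneg by (intro mult_right_mono) auto
    then show "walk_power V E k i u \<le> real (degree V E i) * walk_power V E k i u / dm"
      using assms(3) by (simp add: field_simps)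
  qed
  also have "\<dots> \<le> (\<Sum>i\<in>V. real (degree V E i) * walk_power V E k i u / dm)"
    using assms finite_vertices walk_power_nonneg by (intro sum_mono2) auto
  also have "\<dots> = real (degree V E u) / dm"
    using degree_left_eigenvector[OF assms(1)] by (simp add: sum_divide_distrib[symmetric])
  finally show ?thesis .
qed

lemma card_boundary_eq_sum:
  assumes "S \<subseteq> V"
  shows "real (card (boundary V E S)) = (\<Sum>l\<in>S. real (card {j\<in>V-S. E l j}))"
proof -
  have "finite S"
    using assms finite_vertices finite_subset by blast
  then have "(\<Sum>l\<in>S. card {j\<in>V-S. E l j}) = card (SIGMA l:S. {j\<in>V-S. E l j})"
    using finite_vertices by (subst card_SigmaI) auto
  also have "\<dots> = card ((\<lambda>(u, v). {u, v}) ` (SIGMA l:S. {j\<in>V-S. E l j}))"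
    by (rule card_image[symmetric]) (auto simp: inj_on_def doubleton_eq_iff)
  also have "(\<lambda>(u, v). {u, v}) ` (SIGMA l:S. {j\<in>V-S. E l j}) = boundary V E S"
    unfolding boundary_def by auto
  finally show ?thesis
    by (metis of_nat_sum)
qed

text \<open>Mass outside S stays outside with probability at most 1 (rows of the walk matrix sum
  to 1); mass inside S at l contributes its one-step exit probability from l.\<close>
lemma escaped_mass_step:
  assumes "S \<subseteq> V"
  shows "(\<Sum>j\<in>V-S. walk_power V E (Suc k) i j)
     \<le> (\<Sum>j\<in>V-S. walk_power V E k i j)
       + (\<Sum>l\<in>S. walk_power V E k i l * (\<Sum>j\<in>V-S. walk_matrix V E l j))"
proof -
  define h where "h l = (\<Sum>j\<in>V-S. walk_matrix V E l j)" for l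
  have h_le_1: "h l \<le> 1" if "l \<in> V" for l
  proof -
    have "h l \<le> (\<Sum>j\<in>V. walk_matrix V E l j)"
      unfolding h_def using finite_vertices walk_matrix_nonneg by (intro sum_mono2) auto
    then show ?thesis using walk_matrix_row_sum[OF that] by simp
  qed
  have "(\<Sum>j\<in>V-S. walk_power V E (Suc k) i j) = (\<Sum>l\<in>V. walk_power V E k i l * h l)"
    unfolding h_def by (simp add: sum_distrib_left) (rule sum.swap)
  also have "\<dots> = (\<Sum>l\<in>V-S. walk_power V E k i l * h l) + (\<Sum>l\<in>S. walk_power V E k i l * h l)"
    using sum.subset_diff[OF assms finite_vertices] by simp
  also have "(\<Sum>l\<in>V-S. walk_power V E k i l * h l) \<le> (\<Sum>l\<in>V-S. walk_power V E k i l)"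
    using h_le_1 walk_power_nonneg by (intro sum_mono) (simp add: mult_left_le)
  finally show ?thesis unfolding h_def by simp
qed

lemma escaped_mass_increment_le:
  assumes "S \<subseteq> V" "0 < dm" "\<forall>i\<in>S. dm \<le> real (degree V E i)"
  shows "(\<Sum>i\<in>S. \<Sum>l\<in>S. walk_power V E k i l * (\<Sum>j\<in>V-S. walk_matrix V E l j))
     \<le> real (card (boundary V E S)) / dm"
proof -
  have "(\<Sum>i\<in>S. \<Sum>l\<in>S. walk_power V E k i l * (\<Sum>j\<in>V-S. walk_matrix V E l j))
      = (\<Sum>l\<in>S. (\<Sum>j\<in>V-S. walk_matrix V E l j) * (\<Sum>i\<in>S. walk_power V E k i l))"
    by (subst sum.swap) (simp add: sum_distrib_left mult.commute)
  also have "\<dots> \<le> (\<Sum>l\<in>S. (\<Sum>j\<in>V-S. walk_matrix V E l j) * (real (degree V E l) / dm))"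
    using assms walk_power_column_sum_le[OF subsetD[OF assms(1)] assms]
    by (intro sum_mono mult_left_mono sum_nonneg walk_matrix_nonneg) auto
  also have "\<dots> = (\<Sum>l\<in>S. real (card {j\<in>V-S. E l j}) / dm)"
    using assms(1) degree_pos finite_vertices
    by (intro sum.cong refl) (force simp: sum_walk_matrix)
  also have "\<dots> = real (card (boundary V E S)) / dm"
    using card_boundary_eq_sum[OF assms(1)] by (simp add: sum_divide_distrib)
  finally show ?thesis .
qed

lemma escaped_mass_le:
  assumes "S \<subseteq> V" "0 < dm" "\<forall>i\<in>S. dm \<le> real (degree V E i)"
  shows "(\<Sum>i\<in>S. \<Sum>j\<in>V-S. walk_power V E k i j) \<le> real k * (real (card (boundary V E S)) / dm)"
proof (induction k)
  case 0
  have "(\<Sum>i\<in>S. \<Sum>j\<in>V-S. walk_power V E 0 i j) = 0"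
    by (intro sum.neutral ballI) auto
  then show ?case by simp
next
  case (Suc k)
  have "(\<Sum>i\<in>S. \<Sum>j\<in>V-S. walk_power V E (Suc k) i j)
     \<le> (\<Sum>i\<in>S. \<Sum>j\<in>V-S. walk_power V E k i j)
       + (\<Sum>i\<in>S. \<Sum>l\<in>S. walk_power V E k i l * (\<Sum>j\<in>V-S. walk_matrix V E l j))"
    unfolding sum.distrib[symmetric] using escaped_mass_step[OF assms(1)] by (rule sum_mono)
  moreover have "real (Suc k) * (real (card (boundary V E S)) / dm)
      = real k * (real (card (boundary V E S)) / dm) + real (card (boundary V E S)) / dm"
    by (simp only: of_nat_Suc distrib_right mult_1_left)
  ultimately show ?case
    using Suc.IH escaped_mass_increment_le[OF assms, of k] by linarith
qed

lemma ppr_leakage_le: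
  assumes "S \<subseteq> V" "0 < dm" "\<forall>i\<in>S. dm \<le> real (degree V E i)" "0 < \<alpha>" "\<alpha> < 1"
  shows "(\<Sum>i\<in>S. \<Sum>j\<in>V-S. ppr_matrix V E \<alpha> i j)
     \<le> (1 - \<alpha>) / \<alpha> * (real (card (boundary V E S)) / dm)"
proof -
  define c where "c = real (card (boundary V E S)) / dm"
  define g where "g k = (\<Sum>i\<in>S. \<Sum>j\<in>V-S. walk_power V E k i j)" for k
  have S_finite: "finite S"
    using assms(1) finite_vertices finite_subset by blast
  have g_le: "g k \<le> real k * c" for k
    unfolding g_def c_def using escaped_mass_le[OF assms(1-3)] .
  have entry_le: "walk_power V E k i j \<le> real k * c" if "i \<in> S" "j \<in> V - S" for k i j
    using g_le[of k] member_le_sum[of j "V - S" "walk_power V E k i"]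
      member_le_sum[of i S "\<lambda>i. \<Sum>j\<in>V-S. walk_power V E k i j"]
      that S_finite finite_vertices walk_power_nonneg
    unfolding g_def by (fastforce intro: sum_nonneg)
  have series: "summable (\<lambda>k. (1 - \<alpha>) ^ k * f k)" "(\<Sum>k. (1 - \<alpha>) ^ k * f k) \<le> c * (1 - \<alpha>) / \<alpha>\<^sup>2"
    if "\<And>k. 0 \<le> f k" "\<And>k. f k \<le> real k * c" for f
    using weighted_linear_series[of "1 - \<alpha>" f c] that assms(4,5) by auto
  have summable_entry: "summable (\<lambda>k. \<alpha> * ((1 - \<alpha>) ^ k * walk_power V E k i j))"
    if "i \<in> S" "j \<in> V - S" for i j
    using series(1)[OF walk_power_nonneg entry_le[OF that]] by (rule summable_mult)
  have "(\<Sum>i\<in>S. \<Sum>j\<in>V-S. ppr_matrix V E \<alpha> i j) = (\<Sum>i\<in>S. \<Sum>j\<in>V-S. \<Sum>k. \<alpha> * ((1 - \<alpha>) ^ k * walk_power V E k i j))"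
    unfolding ppr_matrix_def by (simp add: mult.assoc)
  also have "\<dots> = (\<Sum>i\<in>S. \<Sum>k. \<Sum>j\<in>V-S. \<alpha> * ((1 - \<alpha>) ^ k * walk_power V E k i j))"
    by (intro sum.cong refl suminf_sum[symmetric] summable_entry) auto
  also have "\<dots> = (\<Sum>k. \<Sum>i\<in>S. \<Sum>j\<in>V-S. \<alpha> * ((1 - \<alpha>) ^ k * walk_power V E k i j))"
    by (intro suminf_sum[symmetric] summable_sum summable_entry) auto
  also have "\<dots> = (\<Sum>k. \<alpha> * ((1 - \<alpha>) ^ k * g k))"
    unfolding g_def by (simp add: sum_distrib_left)
  also have "\<dots> = \<alpha> * (\<Sum>k. (1 - \<alpha>) ^ k * g k)"
    using series(1)[of g] g_le unfolding g_def
    by (intro suminf_mult) (auto intro: sum_nonneg walk_power_nonneg)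
  also have "\<dots> \<le> \<alpha> * (c * (1 - \<alpha>) / \<alpha>\<^sup>2)"
    using series(2)[of g] g_le assms(4) unfolding g_def
    by (intro mult_left_mono) (auto intro: sum_nonneg walk_power_nonneg)
  also have "\<dots> = (1 - \<alpha>) / \<alpha> * c"
    using assms(4) by (simp add: power2_eq_square field_simps)
  finally show ?thesis unfolding c_def .
qed

end

theorem theorem6:
  fixes V :: "'a set" and E :: "'a \<Rightarrow> 'a \<Rightarrow> bool" and \<alpha> :: real and S :: "'a set"
  assumes "simple_graph V E"
    and "connected_graph V E"
    and "\<forall>v\<in>V. degree V E v > 0"
    and "0 < \<alpha>" and "\<alpha> < 1"
    and "S \<subset> V" and "S \<noteq> {}"
    and "vol V E S \<le> vol V E V / 2"
  shows "ppr_conductance V E \<alpha> S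
           \<le> (1 - \<alpha>) / \<alpha> * (avg_degree V E S / min_degree V E S) * conductance V E S"
proof -
  interpret degree_positive_graph V E
    using assms(1,3) by unfold_locales
  have S_sub: "S \<subseteq> V"
    using assms(6) by blast
  have card_pos: "0 < real (card S)"
    using S_sub assms(7) finite_vertices finite_subset by (simp add: card_gt_0_iff)
  have "0 < vol V E S" "0 < min_degree V E S"
    using vol_pos min_degree_pos S_sub assms(7) by auto
  then have rhs_eq: "(1 - \<alpha>) / \<alpha> * (avg_degree V E S / min_degree V E S) * conductance V E S
      = 1 / real (card S) * ((1 - \<alpha>) / \<alpha> * (real (card (boundary V E S)) / min_degree V E S))"
    unfolding avg_degree_def conductance_def using assms(4) card_pos by (simp add: field_simps)
  have "(\<Sum>i\<in>S. \<Sum>j\<in>V-S. ppr_matrix V E \<alpha> i j)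
      \<le> (1 - \<alpha>) / \<alpha> * (real (card (boundary V E S)) / min_degree V E S)"
    using ppr_leakage_le[OF S_sub min_degree_pos[OF S_sub assms(7)]
        min_degree_le_degree[OF S_sub] assms(4,5)] .
  then show ?thesis
    unfolding ppr_conductance_def rhs_eq using card_pos by (intro mult_left_mono) auto
qed


end
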